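(* Let $C:\mathcal A\to\{0,1\}^+$ be the shortlex source code. For any $u\in\mathcal A$ with $K(u)=k$, we have $|C(u)|\in\{k-1,k\}$. Moreover, for every $k\ge2$, among the $S_k$ admissible strings of cost $k$, exactly $S_k/2$ receive a codeword of length $k-1$ and exactly $S_k/2$ receive a codeword of length $k$.
   Context: Let $\mathcal X=\{A,B,C,D\}$ and let $(X_i)_{i\ge1}$ be the first-order Markov chain on $\mathcal X$ with $\mathbb P(X_1=x)=1/4$ for all $x\in\mathcal X$ and transition probabilities: from $A$ go to $A$ or $C$ with probability $1/2$ each; from $B$ go to $B$ or $D$ with probability $1/2$ each; from $C$ and from $D$ go to each of $A,B,C,D$ with probability $1/4$. A nonempty finite string $x_1^n\in\mathcal X^n$ is admissible if every transition $x_i\to x_{i+1}$ ($1\le i\le n-1$) has positive probability; $\mathcal A\subset\mathcal X^+$ denotes the set of admissible nonempty strings. For $u=x_1^m\in\mathcal A$, the information cost is $K(u):=-\log_2\mathbb P(X_1^m=u)$, and $S_k:=\#\{u\in\mathcal A:K(u)=k\}$. Shortlex source code: order nonempty binary strings by length, then lexicographically, as $b_1,b_2,\dots$; order $\mathcal A$ as $u_1,u_2,\dots$ by increasing $K$, then increasing length, then lexicographically with $A<B<C<D$; set $C(u_j):=b_j$ (the code $C$ is not to be confused with the source symbol $C$). $|w|$ denotes the length of a binary string $w$. *)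

theory Defs
  imports Complex_Main
begin

datatype sym = SA | SB | SC | SD

fun sym_idx :: "sym \<Rightarrow> nat" where
  "sym_idx SA = 0" | "sym_idx SB = 1" | "sym_idx SC = 2" | "sym_idx SD = 3"

fun trans_p :: "sym \<Rightarrow> sym \<Rightarrow> real" where
  "trans_p SA y = (if y = SA \<or> y = SC then 1/2 else 0)"
| "trans_p SB y = (if y = SB \<or> y = SD then 1/2 else 0)"
| "trans_p SC y = 1/4"
| "trans_p SD y = 1/4"

fun chain_p :: "sym \<Rightarrow> sym list \<Rightarrow> real" where
  "chain_p x [] = 1"
| "chain_p x (y # ys) = trans_p x y * chain_p y ys"

text \<open>P(X_1^m = u) for u = x_1..x_m: uniform initial law times transitions.\<close>
fun path_prob :: "sym list \<Rightarrow> real" where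
  "path_prob [] = 1"
| "path_prob (x # xs) = 1/4 * chain_p x xs"

definition admissible :: "sym list set" where
  "admissible = {u. u \<noteq> [] \<and> (\<forall>i. Suc i < length u \<longrightarrow> trans_p (u ! i) (u ! Suc i) > 0)}"

definition info_cost :: "sym list \<Rightarrow> real" where
  "info_cost u = - log 2 (path_prob u)"

definition S_count :: "nat \<Rightarrow> nat" where
  "S_count k = card {u \<in> admissible. info_cost u = real k}"

text \<open>Lexicographic comparison (used for lists of equal length).\<close>
fun lex_lt :: "('a \<Rightarrow> nat) \<Rightarrow> 'a list \<Rightarrow> 'a list \<Rightarrow> bool" where
  "lex_lt f (x # xs) (y # ys) = (f x < f y \<or> (x = y \<and> lex_lt f xs ys))"
| "lex_lt f _ _ = False"

definition src_lt :: "sym list \<Rightarrow> sym list \<Rightarrow> bool" where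
  "src_lt v u = (info_cost v < info_cost u \<or>
     (info_cost v = info_cost u \<and> (length v < length u \<or>
        (length v = length u \<and> lex_lt sym_idx v u))))"

definition bit_idx :: "bool \<Rightarrow> nat" where
  "bit_idx b = (if b then 1 else 0)"

definition shortlex_lt :: "bool list \<Rightarrow> bool list \<Rightarrow> bool" where
  "shortlex_lt w' w = (length w' < length w \<or> (length w' = length w \<and> lex_lt bit_idx w' w))"

text \<open>Zero-based positions in the enumerations u_1,u_2,... and b_1,b_2,...\<close>
definition src_rank :: "sym list \<Rightarrow> nat" where
  "src_rank u = card {v \<in> admissible. src_lt v u}"

definition bin_rank :: "bool list \<Rightarrow> nat" where
  "bin_rank w = card {w'. w' \<noteq> [] \<and> shortlex_lt w' w}"

definition shortlex_code :: "sym list \<Rightarrow> bool list" where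
  "shortlex_code u = (THE w. w \<noteq> [] \<and> bin_rank w = src_rank u)"

end

(* Every positive transition probability is 1/2 (out of A or B) or 1/4 (out of C or D), so the
   cost of an admissible string x_1 ... x_m is 2 plus a sum of step costs 1 or 2 over x_1 ... x_(m-1);
   in particular it is an integer >= 2. Counting continuations of each cost out of each state, with
   the symmetry A <-> B, C <-> D, gives S_k = 2 h_k where h_k + h_(k+1) = 2^k for k >= 1, so that
   exactly 2^(k-1) + h_(k-1) - 2 admissible strings cost less than k. The nonempty binary string of
   0-based shortlex rank r has length floor_log (r + 2). Hence the cost-k string at position p < 2 h_k
   of its class gets rank r with r + 2 = 2^(k-1) + h_(k-1) + p, which lies in [2^(k-1), 2^k) for the
   first h_k positions and in [2^k, 2^k + h_k) for the last h_k. *)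

theory Submission
  imports Defs "HOL-Library.Discrete_Functions"
begin

section \<open>Lexicographic order and ranks\<close>

lemma lex_lt_irrefl: "\<not> lex_lt f xs xs"
  by (induction xs) auto

lemma lex_lt_trans: "lex_lt f xs ys \<Longrightarrow> lex_lt f ys zs \<Longrightarrow> lex_lt f xs zs"
proof (induction f xs ys arbitrary: zs rule: lex_lt.induct)
  case (1 f x xs y ys)
  then show ?case by (cases zs) auto
qed auto

lemma lex_lt_total:
  "inj f \<Longrightarrow> length xs = length ys \<Longrightarrow> xs \<noteq> ys \<Longrightarrow> lex_lt f xs ys \<or> lex_lt f ys xs"
proof (induction f xs ys rule: lex_lt.induct)
  case (1 f x xs y ys)
  then show ?case by (auto dest: injD)
qed auto

lemma bij_betw_rank:
  assumes "finite A"
    and irrefl: "\<And>x. x \<in> A \<Longrightarrow> \<not> R x x"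
    and transitive: "\<And>x y z. x \<in> A \<Longrightarrow> y \<in> A \<Longrightarrow> z \<in> A \<Longrightarrow> R x y \<Longrightarrow> R y z \<Longrightarrow> R x z"
    and total: "\<And>x y. x \<in> A \<Longrightarrow> y \<in> A \<Longrightarrow> x \<noteq> y \<Longrightarrow> R x y \<or> R y x"
  shows "bij_betw (\<lambda>x. card {y \<in> A. R y x}) A {0..<card A}"
proof -
  let ?rank = "\<lambda>x. card {y \<in> A. R y x}"
  have mono: "?rank x < ?rank z" if "x \<in> A" "z \<in> A" "R x z" for x z
  proof (rule psubset_card_mono)
    show "{y \<in> A. R y x} \<subset> {y \<in> A. R y z}"
      using that irrefl transitive by blast
  qed (simp add: \<open>finite A\<close>)
  have inj: "inj_on ?rank A"
  proof (rule inj_onI)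
    fix x z
    assume "x \<in> A" "z \<in> A" "?rank x = ?rank z"
    then show "x = z"
      using total[of x z] mono[of x z] mono[of z x] by fastforce
  qed
  have "?rank x < card A" if "x \<in> A" for x
  proof (rule psubset_card_mono)
    show "{y \<in> A. R y x} \<subset> A"
      using that irrefl by blast
  qed (simp add: \<open>finite A\<close>)
  then have "?rank ` A \<subseteq> {0..<card A}"
    by auto
  moreover have "card (?rank ` A) = card {0..<card A}"
    by (simp add: card_image inj)
  ultimately show ?thesis
    using inj by (simp add: bij_betw_def card_subset_eq)
qed

lemma finite_lists_length_le_UNIV: "finite {xs :: 'a :: finite list. length xs \<le> n}"
  using finite_lists_length_le[of "UNIV :: 'a set" n] by simp

lemma card_filter_bij_betw:
  "bij_betw g A B \<Longrightarrow> card {x \<in> A. P (g x)} = card {y \<in> B. P y}"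
  by (rule bij_betw_same_card[of g]) (auto simp: bij_betw_def inj_on_def)

section \<open>Costs of admissible strings\<close>

lemma UNIV_sym: "UNIV = {SA, SB, SC, SD}"
  using sym.exhaust by auto

instance sym :: finite
  by standard (simp add: UNIV_sym)

fun step_cost :: "sym \<Rightarrow> nat" where
  "step_cost SA = 1" | "step_cost SB = 1" | "step_cost SC = 2" | "step_cost SD = 2"

fun path_cost :: "sym \<Rightarrow> sym list \<Rightarrow> nat" where
  "path_cost x [] = 0"
| "path_cost x (y # ys) = step_cost x + path_cost y ys"

lemma step_cost_pos: "0 < step_cost x"
  by (cases x) auto

lemma length_le_path_cost: "length ys \<le> path_cost x ys"
proof (induction ys arbitrary: x)
  case (Cons y ys)
  show ?case
    using Cons.IH[of y] step_cost_pos[of x] by simp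
qed simp

lemma trans_p_pos_eq: "0 < trans_p x y \<Longrightarrow> trans_p x y = (1/2) ^ step_cost x"
  by (cases x; cases y) (auto simp: power2_eq_square)

lemma admissible_nonempty: "u \<in> admissible \<Longrightarrow> u \<noteq> []"
  by (simp add: admissible_def)

lemma singleton_admissible: "[x] \<in> admissible"
  by (simp add: admissible_def)

lemma Cons_Cons_admissible:
  "x # y # ys \<in> admissible \<longleftrightarrow> 0 < trans_p x y \<and> y # ys \<in> admissible"
  unfolding admissible_def by (auto simp: All_less_Suc2)

lemma chain_p_admissible:
  "x # ys \<in> admissible \<Longrightarrow> chain_p x ys = (1/2) ^ path_cost x ys"
  by (induction ys arbitrary: x) (auto simp: Cons_Cons_admissible trans_p_pos_eq power_add)

definition cost :: "sym list \<Rightarrow> nat" where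
  "cost u = (case u of [] \<Rightarrow> 0 | x # ys \<Rightarrow> 2 + path_cost x ys)"

lemma info_cost_eq_cost:
  assumes "u \<in> admissible"
  shows "info_cost u = real (cost u)"
proof -
  obtain x ys where u: "u = x # ys"
    using admissible_nonempty[OF assms] by (cases u) auto
  have "path_prob u = 1 / 2 ^ cost u"
    using chain_p_admissible assms by (simp add: u cost_def power_add power_divide)
  then show ?thesis
    by (simp add: info_cost_def log_divide)
qed

lemma cost_ge_2: "u \<in> admissible \<Longrightarrow> 2 \<le> cost u"
  using admissible_nonempty by (cases u) (auto simp: cost_def)

section \<open>Counting admissible strings by cost\<close>

lemma card_UN_image_Cons:
  assumes "finite Y" "\<And>y. y \<in> Y \<Longrightarrow> finite (G y)"
  shows "card (\<Union>y\<in>Y. (#) y ` G y) = (\<Sum>y\<in>Y. card (G y))"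
proof -
  have "card (\<Union>y\<in>Y. (#) y ` G y) = (\<Sum>y\<in>Y. card ((#) y ` G y))"
    by (rule card_UN_disjoint) (use assms in auto)
  also have "\<dots> = (\<Sum>y\<in>Y. card (G y))"
    by (simp add: card_image)
  finally show ?thesis .
qed

definition continuations :: "nat \<Rightarrow> sym \<Rightarrow> sym list set" where
  "continuations k x = {ys. x # ys \<in> admissible \<and> path_cost x ys = k}"

lemma finite_continuations: "finite (continuations k x)"
proof (rule finite_subset[OF _ finite_lists_length_le_UNIV])
  show "continuations k x \<subseteq> {ys. length ys \<le> k}"
    unfolding continuations_def using length_le_path_cost by (auto intro: le_trans)
qed

lemma continuations_0: "continuations 0 x = {[]}"
  using step_cost_pos[of x]
  by (auto simp: continuations_def singleton_admissible elim: path_cost.elims)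

lemma continuations_below_step_cost:
  assumes "0 < k" "k < step_cost x"
  shows "continuations k x = {}"
proof -
  have "path_cost x ys \<noteq> k" for ys
    using assms by (cases ys) auto
  then show ?thesis
    by (simp add: continuations_def)
qed

lemma continuations_add_step_cost:
  "continuations (k + step_cost x) x = (\<Union>y\<in>{y. 0 < trans_p x y}. (#) y ` continuations k y)"
proof (intro set_eqI iffI)
  fix ys
  assume ys: "ys \<in> continuations (k + step_cost x) x"
  then obtain y zs where "ys = y # zs"
    using step_cost_pos[of x] by (cases ys) (auto simp: continuations_def)
  with ys show "ys \<in> (\<Union>y\<in>{y. 0 < trans_p x y}. (#) y ` continuations k y)"
    by (auto simp: continuations_def Cons_Cons_admissible)
qed (auto simp: continuations_def Cons_Cons_admissible)

abbreviation ncont :: "nat \<Rightarrow> sym \<Rightarrow> nat" where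
  "ncont k x \<equiv> card (continuations k x)"

lemma ncont_add_step_cost:
  "ncont (k + step_cost x) x = (\<Sum>y | 0 < trans_p x y. ncont k y)"
  unfolding continuations_add_step_cost by (rule card_UN_image_Cons) (auto simp: finite_continuations)

lemma successor_sets:
  "{y. 0 < trans_p SA y} = {SA, SC}" "{y. 0 < trans_p SB y} = {SB, SD}"
  "{y. 0 < trans_p SC y} = UNIV" "{y. 0 < trans_p SD y} = UNIV"
  by (auto simp: UNIV_sym elim: sym.exhaust)

lemma ncont_recurrences:
  "ncont (Suc k) SA = ncont k SA + ncont k SC"
  "ncont (Suc k) SB = ncont k SB + ncont k SD"
  "ncont (Suc (Suc k)) SC = ncont k SA + ncont k SB + ncont k SC + ncont k SD"
  "ncont (Suc (Suc k)) SD = ncont k SA + ncont k SB + ncont k SC + ncont k SD"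
  using ncont_add_step_cost[of k SA, unfolded successor_sets]
    ncont_add_step_cost[of k SB, unfolded successor_sets]
    ncont_add_step_cost[of k SC, unfolded successor_sets]
    ncont_add_step_cost[of k SD, unfolded successor_sets]
  by (simp_all add: UNIV_sym)

lemma ncont_Suc_0: "ncont (Suc 0) SC = 0" "ncont (Suc 0) SD = 0"
  by (simp_all add: continuations_below_step_cost)

lemma ncont_symmetric: "ncont k SB = ncont k SA \<and> ncont k SD = ncont k SC"
proof (induction k rule: nat_less_induct)
  case (1 k)
  consider "k = 0" | "k = Suc 0" | j where "k = Suc (Suc j)"
    by (metis not0_implies_Suc)
  then show ?case
  proof cases
    case 1
    then show ?thesis by (simp add: continuations_0)
  next
    case 2
    then show ?thesis
      using "1.IH" by (simp add: ncont_recurrences ncont_Suc_0)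
  next
    case 3
    then show ?thesis
      using "1.IH" by (simp add: ncont_recurrences)
  qed
qed

lemma ncont_SC_Suc_Suc: "ncont (Suc (Suc k)) SC = 2 * ncont (Suc k) SA"
  using ncont_symmetric[of k] by (simp add: ncont_recurrences)

lemma ncont_SA_Suc_add: "ncont (Suc k) SA + ncont (Suc (Suc k)) SA = 2 ^ Suc (Suc k)"
proof (induction k)
  case 0
  then show ?case by (simp add: ncont_recurrences ncont_Suc_0 continuations_0)
next
  case (Suc k)
  have "ncont (Suc (Suc (Suc k))) SA = ncont (Suc (Suc k)) SA + 2 * ncont (Suc k) SA"
    by (simp add: ncont_recurrences(1)[of "Suc (Suc k)"] ncont_SC_Suc_Suc)
  with Suc.IH show ?case by simp
qed

definition cost_class :: "nat \<Rightarrow> sym list set" where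
  "cost_class k = {u \<in> admissible. cost u = k}"

lemma mem_cost_class_iff: "u \<in> cost_class k \<longleftrightarrow> u \<in> admissible \<and> info_cost u = real k"
  by (auto simp: cost_class_def info_cost_eq_cost)

lemma cost_class_Suc_Suc: "cost_class (Suc (Suc k)) = (\<Union>x. (#) x ` continuations k x)"
proof (intro set_eqI iffI)
  fix u
  assume u: "u \<in> cost_class (Suc (Suc k))"
  then obtain x ys where "u = x # ys"
    using admissible_nonempty[of u] by (cases u) (auto simp: cost_class_def)
  with u show "u \<in> (\<Union>x. (#) x ` continuations k x)"
    by (auto simp: cost_class_def continuations_def cost_def)
qed (auto simp: cost_class_def continuations_def cost_def)

lemma cost_class_less_2: "k < 2 \<Longrightarrow> cost_class k = {}"
  using cost_ge_2 by (fastforce simp: cost_class_def)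

lemma finite_cost_class: "finite (cost_class k)"
proof (cases "k < 2")
  case False
  then obtain j where "k = Suc (Suc j)"
    by (metis add_2_eq_Suc le_add_diff_inverse not_less)
  then show ?thesis
    by (simp add: cost_class_Suc_Suc finite_continuations)
qed (simp add: cost_class_less_2)

lemma card_cost_class_Suc_Suc: "card (cost_class (Suc (Suc k))) = 2 * ncont (Suc k) SA"
proof -
  have "card (cost_class (Suc (Suc k))) = (\<Sum>x\<in>UNIV. ncont k x)"
    unfolding cost_class_Suc_Suc by (rule card_UN_image_Cons) (auto simp: finite_continuations)
  also have "\<dots> = 2 * ncont (Suc k) SA"
    using ncont_symmetric[of k] by (simp add: UNIV_sym ncont_recurrences)
  finally show ?thesis .
qed

(* The h_k of the proof idea. *)
definition half_count :: "nat \<Rightarrow> nat" where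
  "half_count k = (if k < 2 then 0 else ncont (k - 1) SA)"

lemma card_cost_class: "card (cost_class k) = 2 * half_count k"
proof (cases "k < 2")
  case False
  then obtain j where "k = Suc (Suc j)"
    by (metis add_2_eq_Suc le_add_diff_inverse not_less)
  then show ?thesis
    by (simp add: card_cost_class_Suc_Suc half_count_def)
qed (simp add: cost_class_less_2 half_count_def)

lemma half_count_add_Suc: "1 \<le> k \<Longrightarrow> half_count k + half_count (Suc k) = 2 ^ k"
proof (induction k rule: dec_induct)
  case base
  then show ?case by (simp add: half_count_def ncont_recurrences continuations_0)
next
  case (step k)
  then show ?case
    using ncont_SA_Suc_add[of "k - 1"] by (simp add: half_count_def)
qed

lemma finite_cost_le: "finite {v \<in> admissible. cost v \<le> k}"
proof -
  have "{v \<in> admissible. cost v \<le> k} = (\<Union>j\<le>k. cost_class j)"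
    by (auto simp: cost_class_def)
  then show ?thesis
    by (simp add: finite_cost_class)
qed

lemma card_cost_le: "1 \<le> k \<Longrightarrow> card {v \<in> admissible. cost v \<le> k} + 2 = 2 ^ k + half_count k"
proof (induction k rule: dec_induct)
  case base
  have none: "{v \<in> admissible. cost v \<le> 1} = {}"
    using cost_ge_2 by fastforce
  show ?case
    unfolding none by (simp add: half_count_def)
next
  case (step k)
  have split: "{v \<in> admissible. cost v \<le> Suc k}
      = {v \<in> admissible. cost v \<le> k} \<union> cost_class (Suc k)"
    by (auto simp: cost_class_def)
  have "card {v \<in> admissible. cost v \<le> Suc k}
      = card {v \<in> admissible. cost v \<le> k} + card (cost_class (Suc k))"
    unfolding split
    by (rule card_Un_disjoint[OF finite_cost_le finite_cost_class]) (auto simp: cost_class_def)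
  with step.IH half_count_add_Suc[OF step.hyps(1)] show ?case
    by (simp add: card_cost_class)
qed

section \<open>Shortlex ranks of binary strings\<close>

fun bval :: "bool list \<Rightarrow> nat" where
  "bval [] = 0"
| "bval (b # w) = (if b then 2 ^ length w else 0) + bval w"

lemma bval_less: "bval w < 2 ^ length w"
  by (induction w) auto

lemma bval_inj: "length v = length w \<Longrightarrow> bval v = bval w \<Longrightarrow> v = w"
proof (induction v arbitrary: w)
  case (Cons b v)
  then obtain c w' where w: "w = c # w'"
    by (cases w) auto
  have "b = c"
    using Cons.prems bval_less[of v] bval_less[of w'] unfolding w by (auto split: if_splits)
  then show ?case
    using Cons unfolding w by auto
qed simp

lemma inj_on_bval: "inj_on bval {w. length w = n}"
  unfolding inj_on_def using bval_inj by auto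

lemma bij_betw_bval: "bij_betw bval {w. length w = n} {0..<2 ^ n}"
proof -
  have "bval ` {w. length w = n} \<subseteq> {0..<2 ^ n}"
    using bval_less by auto
  moreover have "card (bval ` {w. length w = n}) = card {0..<(2::nat) ^ n}"
    using card_lists_length_eq[of "UNIV :: bool set" n] by (simp add: card_image inj_on_bval)
  ultimately show ?thesis
    using inj_on_bval by (simp add: bij_betw_def card_subset_eq)
qed

lemma lex_lt_bit_idx_iff:
  "length v = length w \<Longrightarrow> lex_lt bit_idx v w \<longleftrightarrow> bval v < bval w"
proof (induction bit_idx v w rule: lex_lt.induct)
  case (1 b v c w)
  then show ?case
    using bval_less[of v] bval_less[of w] by (auto simp: bit_idx_def)
qed auto

lemma card_lex_lt_bit_idx: "card {v. length v = length w \<and> lex_lt bit_idx v w} = bval w"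
proof -
  have "card {v. length v = length w \<and> lex_lt bit_idx v w}
      = card {v \<in> {v. length v = length w}. bval v < bval w}"
    by (simp add: lex_lt_bit_idx_iff conj_commute cong: conj_cong)
  also have "\<dots> = card {y \<in> {0..<2 ^ length w}. y < bval w}"
    by (rule card_filter_bij_betw[OF bij_betw_bval])
  also have "{y \<in> {0..<2 ^ length w}. y < bval w} = {0..<bval w}"
    using bval_less[of w] by auto
  finally show ?thesis by simp
qed

lemma card_nonempty_bool_lists_le: "card {w :: bool list. w \<noteq> [] \<and> length w \<le> n} + 2 = 2 ^ Suc n"
proof (induction n)
  case 0
  have "{w :: bool list. w \<noteq> [] \<and> length w \<le> 0} = {}"
    by auto
  then show ?case by simp
next
  case (Suc n)
  have split: "{w :: bool list. w \<noteq> [] \<and> length w \<le> Suc n}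
      = {w. w \<noteq> [] \<and> length w \<le> n} \<union> {w. length w = Suc n}"
    by auto
  have "card {w :: bool list. w \<noteq> [] \<and> length w \<le> Suc n}
      = card {w :: bool list. w \<noteq> [] \<and> length w \<le> n} + card {w :: bool list. length w = Suc n}"
    unfolding split
    by (rule card_Un_disjoint) (auto intro: finite_subset[OF _ finite_lists_length_le_UNIV])
  with Suc.IH show ?case
    using card_lists_length_eq[of "UNIV :: bool set" "Suc n"] by simp
qed

lemma bin_rank_eq:
  assumes "w \<noteq> []"
  shows "bin_rank w + 2 = 2 ^ length w + bval w"
proof -
  obtain n where n: "length w = Suc n"
    using assms by (cases w) auto
  have split: "{v. v \<noteq> [] \<and> shortlex_lt v w}
      = {v. v \<noteq> [] \<and> length v \<le> n} \<union> {v. length v = length w \<and> lex_lt bit_idx v w}"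
    unfolding shortlex_lt_def n by auto
  have "bin_rank w
      = card {v :: bool list. v \<noteq> [] \<and> length v \<le> n} + card {v. length v = length w \<and> lex_lt bit_idx v w}"
    unfolding bin_rank_def split
    by (rule card_Un_disjoint) (auto simp: n intro: finite_subset[OF _ finite_lists_length_le_UNIV])
  then show ?thesis
    using card_nonempty_bool_lists_le[of n] card_lex_lt_bit_idx[of w] n by simp
qed

lemma length_eq_floor_log_bin_rank: "w \<noteq> [] \<Longrightarrow> length w = floor_log (bin_rank w + 2)"
  using bin_rank_eq[of w] bval_less[of w] by (intro floor_log_eqI[symmetric]) auto

lemma ex1_bin_rank: "\<exists>!w. w \<noteq> [] \<and> bin_rank w = r"
proof -
  define L where "L = floor_log (r + 2)"
  have L: "2 ^ L \<le> r + 2" "r + 2 < 2 * 2 ^ L"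
    unfolding L_def using floor_log_exp2_le[of "r + 2"] floor_log_exp2_gt[of "r + 2"] by auto
  then have "1 \<le> L"
    by (cases L) auto
  have "r + 2 - 2 ^ L \<in> bval ` {w. length w = L}"
    using L bij_betw_imp_surj_on[OF bij_betw_bval[of L]] by auto
  then obtain w where w: "length w = L" "bval w = r + 2 - 2 ^ L"
    by auto
  have "w \<noteq> []"
    using \<open>1 \<le> L\<close> w by auto
  moreover have "bin_rank w = r"
    using bin_rank_eq[OF \<open>w \<noteq> []\<close>] w L by simp
  moreover have "v = w" if "v \<noteq> []" "bin_rank v = r" for v
  proof (rule bval_inj)
    show "length v = length w"
      using that w length_eq_floor_log_bin_rank[of v] by (simp add: L_def)
    then show "bval v = bval w"
      using that w bin_rank_eq[of v] by simp
  qed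
  ultimately show ?thesis
    by blast
qed

lemma length_shortlex_code: "length (shortlex_code u) = floor_log (src_rank u + 2)"
proof -
  have "shortlex_code u \<noteq> [] \<and> bin_rank (shortlex_code u) = src_rank u"
    unfolding shortlex_code_def by (rule theI'[OF ex1_bin_rank])
  then show ?thesis
    using length_eq_floor_log_bin_rank by metis
qed

section \<open>Ranks of source strings\<close>

definition shortlex_sym_lt :: "sym list \<Rightarrow> sym list \<Rightarrow> bool" where
  "shortlex_sym_lt v u \<longleftrightarrow> length v < length u \<or> (length v = length u \<and> lex_lt sym_idx v u)"

definition class_rank :: "nat \<Rightarrow> sym list \<Rightarrow> nat" where
  "class_rank k u = card {v \<in> cost_class k. shortlex_sym_lt v u}"

lemma inj_sym_idx: "inj sym_idx"
  by (rule injI) (elim sym_idx.elims; simp_all)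

lemma bij_betw_class_rank: "bij_betw (class_rank k) (cost_class k) {0..<2 * half_count k}"
  unfolding class_rank_def card_cost_class[symmetric]
proof (rule bij_betw_rank[OF finite_cost_class])
  show "\<not> shortlex_sym_lt u u" for u
    by (simp add: shortlex_sym_lt_def lex_lt_irrefl)
  show "shortlex_sym_lt u w" if "shortlex_sym_lt u v" "shortlex_sym_lt v w" for u v w
    using that lex_lt_trans[of sym_idx u v w] by (auto simp: shortlex_sym_lt_def)
  show "shortlex_sym_lt u v \<or> shortlex_sym_lt v u" if "u \<noteq> v" for u v
    using that lex_lt_total[OF inj_sym_idx, of u v] by (auto simp: shortlex_sym_lt_def)
qed

lemma src_rank_eq:
  assumes "u \<in> cost_class (Suc m)"
  shows "src_rank u = card {v \<in> admissible. cost v \<le> m} + class_rank (Suc m) u"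
proof -
  have split: "{v \<in> admissible. src_lt v u}
      = {v \<in> admissible. cost v \<le> m} \<union> {v \<in> cost_class (Suc m). shortlex_sym_lt v u}"
    using assms
    by (auto simp: src_lt_def shortlex_sym_lt_def cost_class_def info_cost_eq_cost)
  have "finite {v \<in> cost_class (Suc m). shortlex_sym_lt v u}"
    using finite_cost_class by simp
  then show ?thesis
    unfolding src_rank_def class_rank_def split
    by (rule card_Un_disjoint[OF finite_cost_le]) (auto simp: cost_class_def)
qed

lemma length_shortlex_code_cost_class:
  assumes u: "u \<in> cost_class k"
  shows "length (shortlex_code u) = (if class_rank k u < half_count k then k - 1 else k)"
proof -
  have "2 \<le> k"
    using u cost_ge_2 by (auto simp: cost_class_def)
  then obtain m where k: "k = Suc m" and "1 \<le> m"
    by (cases k) auto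
  have rank: "src_rank u + 2 = 2 ^ m + half_count m + class_rank k u"
    using src_rank_eq[OF u[unfolded k]] card_cost_le[OF \<open>1 \<le> m\<close>] k by simp
  have "class_rank k u < 2 * half_count k"
    using bij_betw_apply[OF bij_betw_class_rank u] by simp
  moreover have "half_count m + half_count k = 2 ^ m" "half_count k \<le> 2 ^ k"
    using half_count_add_Suc[of m] half_count_add_Suc[of k] \<open>1 \<le> m\<close> k by auto
  ultimately show ?thesis
    unfolding length_shortlex_code rank k by (auto intro: floor_log_eqI)
qed

lemma S_count_eq: "S_count k = 2 * half_count k"
proof -
  have "{u \<in> admissible. info_cost u = real k} = cost_class k"
    by (auto simp: mem_cost_class_iff)
  then show ?thesis
    by (simp add: S_count_def card_cost_class)
qed

lemma card_cost_class_code_length: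
  "card {u \<in> cost_class k. length (shortlex_code u) = L}
    = card {i \<in> {0..<2 * half_count k}. (if i < half_count k then k - 1 else k) = L}"
proof -
  have "{u \<in> cost_class k. length (shortlex_code u) = L}
      = {u \<in> cost_class k. (if class_rank k u < half_count k then k - 1 else k) = L}"
    by (rule Collect_cong) (auto simp: length_shortlex_code_cost_class)
  with card_filter_bij_betw[OF bij_betw_class_rank,
      of k "\<lambda>i. (if i < half_count k then k - 1 else k) = L"]
  show ?thesis
    by simp
qed

theorem mainTheorem5:
  shows "(\<forall>u k. u \<in> admissible \<and> info_cost u = real k \<longrightarrow>
            length (shortlex_code u) \<in> {k - 1, k})
       \<and> (\<forall>k::nat. k \<ge> 2 \<longrightarrow>
            real (card {u \<in> admissible. info_cost u = real k \<and> length (shortlex_code u) = k - 1})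
              = real (S_count k) / 2
          \<and> real (card {u \<in> admissible. info_cost u = real k \<and> length (shortlex_code u) = k})
              = real (S_count k) / 2)"
proof -
  have by_cost: "{u \<in> admissible. info_cost u = real k \<and> P u} = {u \<in> cost_class k. P u}" for k P
    by (auto simp: mem_cost_class_iff)
  show ?thesis
  proof (intro conjI allI impI)
    fix u k
    assume "u \<in> admissible \<and> info_cost u = real k"
    then show "length (shortlex_code u) \<in> {k - 1, k}"
      by (simp add: length_shortlex_code_cost_class flip: mem_cost_class_iff)
  next
    fix k :: nat
    assume "2 \<le> k"
    then have "{i \<in> {0..<2 * half_count k}. (if i < half_count k then k - 1 else k) = k - 1}
        = {0..<half_count k}"
      and "{i \<in> {0..<2 * half_count k}. (if i < half_count k then k - 1 else k) = k}
        = {half_count k..<2 * half_count k}"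
      by auto
    then show "real (card {u \<in> admissible. info_cost u = real k \<and> length (shortlex_code u) = k - 1})
        = real (S_count k) / 2"
      and "real (card {u \<in> admissible. info_cost u = real k \<and> length (shortlex_code u) = k})
        = real (S_count k) / 2"
      by (simp_all add: by_cost card_cost_class_code_length S_count_eq)
  qed
qed

end
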